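(* For each $N$, let $(\Sigma_t)_{t\ge0}$ be a time-homogeneous Markov chain on a finite state space and $V$ a real function on that space. Suppose there are constants $V_{\max},\bar\eta,\gamma,C,C',K>0$ independent of $N$ such that for all $N$ and all $t\ge0$, almost surely: $0\le V(\Sigma_t)\le V_{\max}$; if $V(\Sigma_t)>\bar\eta$ then $\mathbb E[V(\Sigma_{t+1})-V(\Sigma_t)\mid\Sigma_t]\le-\gamma$ and $\mathbb E[(V(\Sigma_{t+1})-V(\Sigma_t))^+\mid\Sigma_t]\le K/\sqrt N$; if $\bar\eta/2<V(\Sigma_t)\le\bar\eta$ then $\mathbb E[(V(\Sigma_{t+1})-V(\Sigma_t))^+\mid\Sigma_t]\le Ke^{-CN}$; if $V(\Sigma_t)\le\bar\eta/2$ then $\mathbb P(V(\Sigma_{t+1})>\bar\eta/2\mid\Sigma_t)\le Ke^{-C'N}$. Then there are constants $C''>0$, $K''$ independent of $N$ such that for all sufficiently large $N$, $$\mathbb P(V(\Sigma_\infty)>\bar\eta)\le K''e^{-C''N}.$$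
   Context: For a function $f$ of the chain state, $\mathbb E[f(\Sigma_\infty)]$ denotes the long-run average $\lim_{T\to\infty}\frac1T\sum_{t=0}^{T-1}\mathbb E[f(\Sigma_t)]$ (which exists for a finite-state Markov chain, possibly depending on the initial state); in particular $\mathbb P(V(\Sigma_\infty)>\bar\eta)=\lim_{T\to\infty}\frac1T\sum_{t<T}\mathbb P(V(\Sigma_t)>\bar\eta)$. *)

theory Defs
  imports "HOL-Probability.Probability"
begin

definition mc_dist :: "('a \<Rightarrow> 'a pmf) \<Rightarrow> 'a pmf \<Rightarrow> nat \<Rightarrow> 'a pmf" where
  "mc_dist Q \<mu> t = ((\<lambda>p. bind_pmf p Q) ^^ t) \<mu>"

definition longrun_prob :: "('a \<Rightarrow> 'a pmf) \<Rightarrow> 'a pmf \<Rightarrow> 'a set \<Rightarrow> real" where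
  "longrun_prob Q \<mu> A = lim (\<lambda>T. (\<Sum>t<T. measure_pmf.prob (mc_dist Q \<mu> t) A) / real T)"

end

theory Submission
  imports Defs
begin

text \<open>Truncating V at \<eta>/2 gives \<Phi> = max V (\<eta>/2), whose expected one-step increase is at most
  \<epsilon> = K e^{-CN} + Vmax K e^{-C'N} everywhere and at most \<epsilon> - c, c = \<gamma> min(1, \<eta>/(2 Vmax)) / 2,
  above \<eta> as soon as K/\<surd>N \<le> c: the downward drift of V survives the truncation because
  a single step of size \<le> Vmax scaled by min(1, \<eta>/(2 Vmax)) cannot cross \<eta>/2.
  As \<Phi> is bounded, summing these drift inequalities over time shows that the chain spends a
  long-run fraction of at most \<epsilon>/c of its time above \<eta>.

  That this long-run fraction exists at all is the mean ergodic theorem for the transition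
  matrix P of a finite chain: the Cesaro means of the powers of P are bounded, and any two of
  their subsequential limits L1, L2 are invariant under P on both sides, hence L1 = L1 L2 = L2.\<close>

section \<open>Cesaro means of the powers of a finite matrix\<close>

text \<open>Square matrices indexed by a finite set S are functions of type 'a \<Rightarrow> 'a \<Rightarrow> real;
  only their entries on S \<times> S are meaningful.\<close>

definition mat_mult :: "'a set \<Rightarrow> ('a \<Rightarrow> 'a \<Rightarrow> real) \<Rightarrow> ('a \<Rightarrow> 'a \<Rightarrow> real) \<Rightarrow> 'a \<Rightarrow> 'a \<Rightarrow> real" where
  "mat_mult S A B x z = (\<Sum>y\<in>S. A x y * B y z)"

primrec mat_pow :: "'a set \<Rightarrow> ('a \<Rightarrow> 'a \<Rightarrow> real) \<Rightarrow> nat \<Rightarrow> 'a \<Rightarrow> 'a \<Rightarrow> real" where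
  "mat_pow S P 0 = (\<lambda>x z. of_bool (x = z))"
| "mat_pow S P (Suc t) = mat_mult S (mat_pow S P t) P"

definition cesaro_mean :: "'a set \<Rightarrow> ('a \<Rightarrow> 'a \<Rightarrow> real) \<Rightarrow> nat \<Rightarrow> 'a \<Rightarrow> 'a \<Rightarrow> real" where
  "cesaro_mean S P T x z = (\<Sum>t<T. mat_pow S P t x z) / real T"

lemma mat_mult_assoc:
  "mat_mult S (mat_mult S A B) C x z = mat_mult S A (mat_mult S B C) x z"
  unfolding mat_mult_def sum_distrib_right sum_distrib_left
  by (subst sum.swap) (simp add: mult.assoc)

lemma mat_mult_cong:
  assumes "\<And>y. y \<in> S \<Longrightarrow> A x y = A' x y" "\<And>y. y \<in> S \<Longrightarrow> B y z = B' y z"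
  shows "mat_mult S A B x z = mat_mult S A' B' x z"
  unfolding mat_mult_def using assms by (intro sum.cong) auto

lemma mat_mult_one_right:
  assumes "finite S" "z \<in> S"
  shows "mat_mult S A (mat_pow S P 0) x z = A x z"
  using assms by (simp add: mat_mult_def)

lemma mat_mult_one_left:
  assumes "finite S" "x \<in> S"
  shows "mat_mult S (mat_pow S P 0) A x z = A x z"
  using assms by (simp add: mat_mult_def)

lemma mat_pow_Suc_left:
  assumes "finite S" "x \<in> S" "z \<in> S"
  shows "mat_pow S P (Suc t) x z = mat_mult S P (mat_pow S P t) x z"
  using assms(2,3)
proof (induction t arbitrary: x z)
  case 0
  then show ?case
    using assms(1) by (simp only: mat_pow.simps(2) mat_mult_one_right mat_mult_one_left)
next
  case (Suc t)
  have "mat_pow S P (Suc (Suc t)) x z = mat_mult S (mat_mult S P (mat_pow S P t)) P x z"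
    unfolding mat_pow.simps(2)[of S P "Suc t"] using Suc.IH Suc.prems by (intro mat_mult_cong) auto
  then show ?case by (simp add: mat_mult_assoc)
qed

lemma tendsto_mat_mult:
  assumes "finite S"
    and "\<And>y. y \<in> S \<Longrightarrow> (\<lambda>n. A n x y) \<longlonglongrightarrow> A' x y"
    and "\<And>y. y \<in> S \<Longrightarrow> (\<lambda>n. B n y z) \<longlonglongrightarrow> B' y z"
  shows "(\<lambda>n. mat_mult S (A n) (B n) x z) \<longlonglongrightarrow> mat_mult S A' B' x z"
  unfolding mat_mult_def using assms by (intro tendsto_sum tendsto_mult) auto

lemma sum_mat_pow_Suc:
  "(\<Sum>t<T. mat_pow S P (Suc t) x z) = (\<Sum>t<T. mat_pow S P t x z) + (mat_pow S P T x z - mat_pow S P 0 x z)"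
  using sum_lessThan_telescope[of "\<lambda>t. mat_pow S P t x z" T] by (simp add: sum_subtractf)

lemma mat_mult_cesaro_mean_right:
  "mat_mult S A (cesaro_mean S P T) x z = (\<Sum>t<T. mat_mult S A (mat_pow S P t) x z) / real T"
  unfolding mat_mult_def cesaro_mean_def
  by (simp add: sum_divide_distrib sum_distrib_left) (rule sum.swap)

lemma mat_mult_cesaro_mean_left:
  "mat_mult S (cesaro_mean S P T) A x z = (\<Sum>t<T. mat_mult S (mat_pow S P t) A x z) / real T"
  unfolding mat_mult_def cesaro_mean_def
  by (simp add: sum_divide_distrib sum_distrib_right) (rule sum.swap)

lemma cesaro_mean_mult_right:
  "mat_mult S (cesaro_mean S P T) P x z
     = cesaro_mean S P T x z + (mat_pow S P T x z - mat_pow S P 0 x z) / real T"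
  unfolding mat_mult_cesaro_mean_left mat_pow.simps(2)[symmetric] sum_mat_pow_Suc
  by (simp add: cesaro_mean_def add_divide_distrib)

lemma cesaro_mean_mult_left:
  assumes "finite S" "x \<in> S" "z \<in> S"
  shows "mat_mult S P (cesaro_mean S P T) x z
     = cesaro_mean S P T x z + (mat_pow S P T x z - mat_pow S P 0 x z) / real T"
  unfolding mat_mult_cesaro_mean_right mat_pow_Suc_left[OF assms, symmetric] sum_mat_pow_Suc
  by (simp add: cesaro_mean_def add_divide_distrib)

lemma abs_cesaro_mean_le:
  assumes "\<And>t. \<bar>mat_pow S P t x z\<bar> \<le> B"
  shows "\<bar>cesaro_mean S P T x z\<bar> \<le> B"
proof (cases "T = 0")
  case True
  then show ?thesis using order_trans[OF abs_ge_zero assms] by (simp add: cesaro_mean_def)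
next
  case False
  have "\<bar>\<Sum>t<T. mat_pow S P t x z\<bar> \<le> (\<Sum>t<T. \<bar>mat_pow S P t x z\<bar>)"
    by (rule sum_abs)
  also have "\<dots> \<le> real T * B"
    using sum_mono[of "{..<T}" "\<lambda>t. \<bar>mat_pow S P t x z\<bar>" "\<lambda>_. B"] assms by simp
  finally have "\<bar>\<Sum>t<T. mat_pow S P t x z\<bar> \<le> real T * B" .
  then show ?thesis using False by (simp add: cesaro_mean_def field_simps)
qed

lemma LIMSEQ_bounded_div_real:
  fixes f :: "nat \<Rightarrow> real"
  assumes "\<And>n. \<bar>f n\<bar> \<le> B"
  shows "(\<lambda>n. f n / real n) \<longlonglongrightarrow> 0"
proof (rule Lim_null_comparison[OF always_eventually lim_const_over_n[of B]], intro allI)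
  fix n
  show "norm (f n / real n) \<le> B / real n"
    using assms[of n] by (simp add: abs_divide divide_right_mono)
qed

lemma cesaro_limit_invariant:
  assumes fin: "finite S" and bnd: "\<And>t x z. x \<in> S \<Longrightarrow> z \<in> S \<Longrightarrow> \<bar>mat_pow S P t x z\<bar> \<le> B"
    and r: "strict_mono r"
    and L: "\<And>x z. x \<in> S \<Longrightarrow> z \<in> S \<Longrightarrow> (\<lambda>n. cesaro_mean S P (r n) x z) \<longlonglongrightarrow> L x z"
    and xz: "x \<in> S" "z \<in> S"
  shows "mat_mult S L P x z = L x z" "mat_mult S P L x z = L x z"
proof -
  define err where "err T = (mat_pow S P T x z - mat_pow S P 0 x z) / real T" for T
  have "err \<longlonglongrightarrow> 0"
    unfolding err_def
  proof (rule LIMSEQ_bounded_div_real[where B = "2 * B"])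
    show "\<bar>mat_pow S P T x z - mat_pow S P 0 x z\<bar> \<le> 2 * B" for T
      using bnd[OF xz, of T] bnd[OF xz, of 0] by arith
  qed
  then have "(\<lambda>n. cesaro_mean S P (r n) x z + err (r n)) \<longlonglongrightarrow> L x z + 0"
    using LIMSEQ_subseq_LIMSEQ[OF _ r] by (intro tendsto_add L xz) (auto simp: o_def)
  then have lim: "(\<lambda>n. cesaro_mean S P (r n) x z + err (r n)) \<longlonglongrightarrow> L x z"
    by simp
  have "(\<lambda>n. mat_mult S (cesaro_mean S P (r n)) P x z) \<longlonglongrightarrow> mat_mult S L P x z"
    using L xz by (intro tendsto_mat_mult fin) auto
  with lim show "mat_mult S L P x z = L x z"
    by (simp add: cesaro_mean_mult_right err_def LIMSEQ_unique)
  have "(\<lambda>n. mat_mult S P (cesaro_mean S P (r n)) x z) \<longlonglongrightarrow> mat_mult S P L x z"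
    using L xz by (intro tendsto_mat_mult fin) auto
  with lim show "mat_mult S P L x z = L x z"
    by (simp add: cesaro_mean_mult_left[OF fin xz] err_def LIMSEQ_unique)
qed

lemma mat_mult_cesaro_mean_invariant_right:
  assumes fin: "finite S" and inv: "\<And>x z. x \<in> S \<Longrightarrow> z \<in> S \<Longrightarrow> mat_mult S L P x z = L x z"
    and xz: "x \<in> S" "z \<in> S" and "T > 0"
  shows "mat_mult S L (cesaro_mean S P T) x z = L x z"
proof -
  have pow: "mat_mult S L (mat_pow S P t) x z = L x z" for t
    using xz(2)
  proof (induction t arbitrary: z)
    case 0
    then show ?case using fin by (simp only: mat_mult_one_right)
  next
    case (Suc t)
    have "mat_mult S L (mat_pow S P (Suc t)) x z = mat_mult S (mat_mult S L (mat_pow S P t)) P x z"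
      by (simp add: mat_mult_assoc[symmetric])
    also have "\<dots> = mat_mult S L P x z"
      using Suc.IH by (intro mat_mult_cong) auto
    finally show ?case using inv xz Suc.prems by simp
  qed
  show ?thesis using \<open>T > 0\<close> by (simp add: mat_mult_cesaro_mean_right pow)
qed

lemma mat_mult_cesaro_mean_invariant_left:
  assumes fin: "finite S" and inv: "\<And>x z. x \<in> S \<Longrightarrow> z \<in> S \<Longrightarrow> mat_mult S P L x z = L x z"
    and xz: "x \<in> S" "z \<in> S" and "T > 0"
  shows "mat_mult S (cesaro_mean S P T) L x z = L x z"
proof -
  have pow: "mat_mult S (mat_pow S P t) L x z = L x z" for t
    using xz(1)
  proof (induction t arbitrary: x)
    case 0
    then show ?case using fin by (simp only: mat_mult_one_left)
  next
    case (Suc t)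
    have "mat_mult S (mat_pow S P (Suc t)) L x z = mat_mult S (mat_pow S P t) (mat_mult S P L) x z"
      by (simp add: mat_mult_assoc)
    also have "\<dots> = mat_mult S (mat_pow S P t) L x z"
      using inv xz(2) by (intro mat_mult_cong) auto
    finally show ?case using Suc by simp
  qed
  show ?thesis using \<open>T > 0\<close> by (simp add: mat_mult_cesaro_mean_left pow)
qed

lemma cesaro_limit_unique:
  assumes fin: "finite S" and bnd: "\<And>t x z. x \<in> S \<Longrightarrow> z \<in> S \<Longrightarrow> \<bar>mat_pow S P t x z\<bar> \<le> B"
    and r1: "strict_mono r1"
    and L1: "\<And>x z. x \<in> S \<Longrightarrow> z \<in> S \<Longrightarrow> (\<lambda>n. cesaro_mean S P (r1 n) x z) \<longlonglongrightarrow> L1 x z"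
    and r2: "strict_mono r2"
    and L2: "\<And>x z. x \<in> S \<Longrightarrow> z \<in> S \<Longrightarrow> (\<lambda>n. cesaro_mean S P (r2 n) x z) \<longlonglongrightarrow> L2 x z"
    and xz: "x \<in> S" "z \<in> S"
  shows "L1 x z = L2 x z"
proof -
  have pos: "\<forall>\<^sub>F n in sequentially. r n > 0" if "strict_mono r" for r :: "nat \<Rightarrow> nat"
    using eventually_gt_at_top[of 0] by eventually_elim (meson seq_suble[OF that] less_le_trans)
  have "mat_mult S L1 (cesaro_mean S P T) x z = L1 x z" if "T > 0" for T
    using cesaro_limit_invariant(1)[OF fin bnd r1 L1] xz that
    by (rule mat_mult_cesaro_mean_invariant_right[OF fin])
  then have "\<forall>\<^sub>F n in sequentially. mat_mult S L1 (cesaro_mean S P (r2 n)) x z = L1 x z"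
    using pos[OF r2] by (simp add: eventually_mono)
  moreover have "(\<lambda>n. mat_mult S L1 (cesaro_mean S P (r2 n)) x z) \<longlonglongrightarrow> mat_mult S L1 L2 x z"
    using L2 xz by (intro tendsto_mat_mult fin) auto
  ultimately have "L1 x z = mat_mult S L1 L2 x z"
    by (simp add: LIMSEQ_const_iff tendsto_cong)
  have "mat_mult S (cesaro_mean S P T) L2 x z = L2 x z" if "T > 0" for T
    using cesaro_limit_invariant(2)[OF fin bnd r2 L2] xz that
    by (rule mat_mult_cesaro_mean_invariant_left[OF fin])
  then have "\<forall>\<^sub>F n in sequentially. mat_mult S (cesaro_mean S P (r1 n)) L2 x z = L2 x z"
    using pos[OF r1] by (simp add: eventually_mono)
  moreover have "(\<lambda>n. mat_mult S (cesaro_mean S P (r1 n)) L2 x z) \<longlonglongrightarrow> mat_mult S L1 L2 x z"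
    using L1 xz by (intro tendsto_mat_mult fin) auto
  ultimately have "L2 x z = mat_mult S L1 L2 x z"
    by (simp add: LIMSEQ_const_iff tendsto_cong)
  with \<open>L1 x z = mat_mult S L1 L2 x z\<close> show ?thesis by simp
qed

lemma finite_family_convergent_subseq:
  fixes f :: "nat \<Rightarrow> 'i \<Rightarrow> real"
  assumes "finite I" and "\<And>i n. i \<in> I \<Longrightarrow> \<bar>f n i\<bar> \<le> B"
  shows "\<exists>r l. strict_mono r \<and> (\<forall>i\<in>I. (\<lambda>n. f (r n) i) \<longlonglongrightarrow> l i)"
  using assms
proof (induction I rule: finite_induct)
  case empty
  show ?case using strict_mono_id by auto
next
  case (insert j I)
  then obtain r l where r: "strict_mono r" and l: "\<forall>i\<in>I. (\<lambda>n. f (r n) i) \<longlonglongrightarrow> l i"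
    by auto
  have "bounded (range (\<lambda>n. f (r n) j))"
    unfolding bounded_iff using insert.prems by auto
  then obtain lj r' where r': "strict_mono r'" and lj: "((\<lambda>n. f (r n) j) \<circ> r') \<longlonglongrightarrow> lj"
    using bounded_imp_convergent_subsequence by blast
  have "(\<lambda>n. f (r (r' n)) i) \<longlonglongrightarrow> (l(j := lj)) i" if "i \<in> insert j I" for i
    using that lj LIMSEQ_subseq_LIMSEQ[OF bspec[OF l] r'] \<open>j \<notin> I\<close> by (auto simp: o_def)
  moreover have "strict_mono (r \<circ> r')"
    using r r' by (rule strict_mono_o)
  ultimately show ?case
    by (intro exI[of _ "r \<circ> r'"] exI[of _ "l(j := lj)"]) (simp add: o_def)
qed

lemma LIMSEQ_subseq_subseq:
  fixes X :: "nat \<Rightarrow> 'b::topological_space"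
  assumes "\<And>s :: nat \<Rightarrow> nat. strict_mono s \<Longrightarrow> \<exists>r. strict_mono r \<and> (\<lambda>n. X (s (r n))) \<longlonglongrightarrow> L"
  shows "X \<longlonglongrightarrow> L"
proof (rule ccontr)
  assume "\<not> X \<longlonglongrightarrow> L"
  then obtain U where U: "open U" "L \<in> U" and "\<not> (\<forall>\<^sub>F n in sequentially. X n \<in> U)"
    unfolding tendsto_def by blast
  then have G: "infinite {n. X n \<notin> U}"
    by (simp add: not_eventually frequently_cofinite[symmetric] cofinite_eq_sequentially)
  define s where "s = enumerate {n. X n \<notin> U}"
  have "strict_mono s"
    unfolding s_def using G by (rule strict_mono_enumerate)
  then obtain r where "(\<lambda>n. X (s (r n))) \<longlonglongrightarrow> L"
    using assms by blast
  then have "\<forall>\<^sub>F n in sequentially. X (s (r n)) \<in> U"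
    using U by (rule topological_tendstoD)
  moreover have "X (s n) \<notin> U" for n
    using enumerate_in_set[OF G, of n] unfolding s_def by simp
  ultimately show False by simp
qed

theorem cesaro_mean_convergent:
  assumes fin: "finite S" and bnd: "\<And>t x z. x \<in> S \<Longrightarrow> z \<in> S \<Longrightarrow> \<bar>mat_pow S P t x z\<bar> \<le> B"
  shows "\<exists>L. \<forall>x\<in>S. \<forall>z\<in>S. (\<lambda>T. cesaro_mean S P T x z) \<longlonglongrightarrow> L x z"
proof -
  have subseq_limit: "\<exists>r L. strict_mono r \<and> (\<forall>x\<in>S. \<forall>z\<in>S. (\<lambda>n. cesaro_mean S P (s (r n)) x z) \<longlonglongrightarrow> L x z)"
    for s :: "nat \<Rightarrow> nat"
  proof -
    have "\<bar>case_prod (cesaro_mean S P (s n)) i\<bar> \<le> B" if "i \<in> S \<times> S" for i n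
      using that abs_cesaro_mean_le[OF bnd] by auto
    then obtain r l where "strict_mono r"
      and "\<forall>i\<in>S \<times> S. (\<lambda>n. case_prod (cesaro_mean S P (s (r n))) i) \<longlonglongrightarrow> l i"
      using finite_family_convergent_subseq[of "S \<times> S" "\<lambda>n. case_prod (cesaro_mean S P (s n))" B] fin
      by blast
    then show ?thesis by (intro exI[of _ r] exI[of _ "curry l"]) auto
  qed
  obtain r L where r: "strict_mono r" and L: "\<forall>x\<in>S. \<forall>z\<in>S. (\<lambda>n. cesaro_mean S P (r n) x z) \<longlonglongrightarrow> L x z"
    using subseq_limit[of id] by auto
  have "(\<lambda>T. cesaro_mean S P T x z) \<longlonglongrightarrow> L x z" if xz: "x \<in> S" "z \<in> S" for x z
  proof (rule LIMSEQ_subseq_subseq)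
    fix s :: "nat \<Rightarrow> nat" assume s: "strict_mono s"
    obtain r' L' where r': "strict_mono r'"
      and L': "\<forall>x\<in>S. \<forall>z\<in>S. (\<lambda>n. cesaro_mean S P (s (r' n)) x z) \<longlonglongrightarrow> L' x z"
      using subseq_limit[of s] by blast
    have "L' x z = L x z"
    proof (rule cesaro_limit_unique[OF fin bnd strict_mono_o[OF s r'] _ r _ xz])
      show "(\<lambda>n. cesaro_mean S P ((s \<circ> r') n) x z) \<longlonglongrightarrow> L' x z" if "x \<in> S" "z \<in> S" for x z
        using L' that by simp
      show "(\<lambda>n. cesaro_mean S P (r n) x z) \<longlonglongrightarrow> L x z" if "x \<in> S" "z \<in> S" for x z
        using L that by simp
    qed
    moreover have "(\<lambda>n. cesaro_mean S P (s (r' n)) x z) \<longlonglongrightarrow> L' x z"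
      using L' xz by blast
    ultimately show "\<exists>r. strict_mono r \<and> (\<lambda>n. cesaro_mean S P (s (r n)) x z) \<longlonglongrightarrow> L x z"
      using r' by auto
  qed
  then show ?thesis by blast
qed

section \<open>Long-run averages of finite Markov chains\<close>

definition transition_matrix :: "('a \<Rightarrow> 'a pmf) \<Rightarrow> 'a \<Rightarrow> 'a \<Rightarrow> real" where
  "transition_matrix Q x z = pmf (Q x) z"

lemma mc_dist_0 [simp]: "mc_dist Q \<mu> 0 = \<mu>"
  by (simp add: mc_dist_def)

lemma mc_dist_Suc [simp]: "mc_dist Q \<mu> (Suc t) = bind_pmf (mc_dist Q \<mu> t) Q"
  by (simp add: mc_dist_def)

lemma set_pmf_mc_dist_subset:
  assumes "set_pmf \<mu> \<subseteq> S" "\<And>x. x \<in> S \<Longrightarrow> set_pmf (Q x) \<subseteq> S"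
  shows "set_pmf (mc_dist Q \<mu> t) \<subseteq> S"
  by (induction t) (use assms in auto)

lemma expectation_pmf_finite:
  fixes f :: "'a \<Rightarrow> real"
  assumes "finite S" "set_pmf p \<subseteq> S"
  shows "measure_pmf.expectation p f = (\<Sum>y\<in>S. pmf p y * f y)"
  using assms by (subst integral_measure_pmf_real[of S]) (auto simp: mult.commute)

lemma prob_pmf_finite:
  assumes "finite S" "set_pmf p \<subseteq> S"
  shows "measure_pmf.prob p A = (\<Sum>z\<in>S \<inter> A. pmf p z)"
proof -
  have "measure_pmf.prob p A = measure_pmf.prob p ((S \<inter> A) \<inter> set_pmf p)"
    using assms(2) measure_Int_set_pmf[of p A] by (simp add: Int_absorb1 inf_commute inf_left_commute)
  also have "\<dots> = (\<Sum>z\<in>S \<inter> A. pmf p z)"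
    using assms(1) by (simp add: measure_Int_set_pmf measure_measure_pmf_finite)
  finally show ?thesis .
qed

lemma pmf_mc_dist_eq_mat_pow:
  assumes fin: "finite S" and init: "set_pmf \<mu> \<subseteq> S" and closed: "\<And>x. x \<in> S \<Longrightarrow> set_pmf (Q x) \<subseteq> S"
  shows "pmf (mc_dist Q \<mu> t) z = (\<Sum>x\<in>S. pmf \<mu> x * mat_pow S (transition_matrix Q) t x z)"
proof (induction t arbitrary: z)
  case 0
  show ?case using fin init by (cases "z \<in> S") (auto simp: pmf_eq_0_set_pmf)
next
  case (Suc t)
  have "pmf (mc_dist Q \<mu> (Suc t)) z = (\<Sum>y\<in>S. pmf (mc_dist Q \<mu> t) y * pmf (Q y) z)"
    using expectation_pmf_finite[OF fin set_pmf_mc_dist_subset[OF init closed]] by (simp add: pmf_bind)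
  also have "\<dots> = (\<Sum>y\<in>S. \<Sum>x\<in>S. pmf \<mu> x * (mat_pow S (transition_matrix Q) t x y * pmf (Q y) z))"
    by (simp add: Suc.IH sum_distrib_right mult.assoc)
  also have "\<dots> = (\<Sum>x\<in>S. pmf \<mu> x * mat_pow S (transition_matrix Q) (Suc t) x z)"
    by (subst sum.swap) (simp add: mat_mult_def transition_matrix_def sum_distrib_left)
  finally show ?case .
qed

lemma mat_pow_transition_matrix_eq_pmf:
  assumes fin: "finite S" and x: "x \<in> S" and closed: "\<And>x. x \<in> S \<Longrightarrow> set_pmf (Q x) \<subseteq> S"
  shows "mat_pow S (transition_matrix Q) t x z = pmf (mc_dist Q (return_pmf x) t) z"
proof -
  have "pmf (mc_dist Q (return_pmf x) t) z
      = (\<Sum>y\<in>S. pmf (return_pmf x) y * mat_pow S (transition_matrix Q) t y z)"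
    using x by (intro pmf_mc_dist_eq_mat_pow[where Q = Q, OF fin _ closed]) auto
  also have "\<dots> = mat_pow S (transition_matrix Q) t x z"
    using fin x by (simp add: pmf_return indicator_def)
  finally show ?thesis by simp
qed

lemma LIMSEQ_longrun_prob:
  assumes fin: "finite S" and init: "set_pmf \<mu> \<subseteq> S" and closed: "\<And>x. x \<in> S \<Longrightarrow> set_pmf (Q x) \<subseteq> S"
  shows "(\<lambda>T. (\<Sum>t<T. measure_pmf.prob (mc_dist Q \<mu> t) A) / real T) \<longlonglongrightarrow> longrun_prob Q \<mu> A"
proof -
  let ?M = "cesaro_mean S (transition_matrix Q)"
  have "\<bar>mat_pow S (transition_matrix Q) t x z\<bar> \<le> 1" if "x \<in> S" for t x z
    using mat_pow_transition_matrix_eq_pmf[OF fin that closed] by (simp add: pmf_le_1)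
  then obtain L where L: "\<forall>x\<in>S. \<forall>z\<in>S. (\<lambda>T. ?M T x z) \<longlonglongrightarrow> L x z"
    using cesaro_mean_convergent[OF fin] by blast
  have avg: "(\<Sum>t<T. measure_pmf.prob (mc_dist Q \<mu> t) A) / real T
      = (\<Sum>x\<in>S. pmf \<mu> x * (\<Sum>z\<in>S \<inter> A. ?M T x z))" for T
  proof -
    let ?p = "\<lambda>t x z. pmf \<mu> x * mat_pow S (transition_matrix Q) t x z"
    have "(\<Sum>t<T. measure_pmf.prob (mc_dist Q \<mu> t) A) = (\<Sum>t<T. \<Sum>z\<in>S \<inter> A. \<Sum>x\<in>S. ?p t x z)"
      by (simp add: prob_pmf_finite[OF fin set_pmf_mc_dist_subset[OF init closed]]
          pmf_mc_dist_eq_mat_pow[OF fin init closed])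
    also have "\<dots> = (\<Sum>z\<in>S \<inter> A. \<Sum>t<T. \<Sum>x\<in>S. ?p t x z)"
      by (rule sum.swap[where A = "{..<T}" and B = "S \<inter> A"])
    also have "\<dots> = (\<Sum>z\<in>S \<inter> A. \<Sum>x\<in>S. \<Sum>t<T. ?p t x z)"
      by (intro sum.cong refl sum.swap[where A = "{..<T}" and B = S])
    also have "\<dots> = (\<Sum>x\<in>S. \<Sum>z\<in>S \<inter> A. \<Sum>t<T. ?p t x z)"
      by (rule sum.swap[where A = "S \<inter> A" and B = S])
    also have "\<dots> = (\<Sum>x\<in>S. pmf \<mu> x * (\<Sum>z\<in>S \<inter> A. \<Sum>t<T. mat_pow S (transition_matrix Q) t x z))"
      by (simp only: sum_distrib_left)
    finally show ?thesis
      by (simp only: cesaro_mean_def sum_divide_distrib[symmetric] times_divide_eq_right)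
  qed
  have "(\<lambda>T. \<Sum>x\<in>S. pmf \<mu> x * (\<Sum>z\<in>S \<inter> A. ?M T x z)) \<longlonglongrightarrow> (\<Sum>x\<in>S. pmf \<mu> x * (\<Sum>z\<in>S \<inter> A. L x z))"
    using L by (intro tendsto_sum tendsto_mult_left) auto
  then have "convergent (\<lambda>T. (\<Sum>t<T. measure_pmf.prob (mc_dist Q \<mu> t) A) / real T)"
    unfolding avg convergent_def by blast
  then show ?thesis
    unfolding longrun_prob_def by (simp add: convergent_LIMSEQ_iff)
qed

section \<open>Drift bounds on the long-run occupation\<close>

lemma expectation_bind_pmf_finite:
  fixes f :: "'a \<Rightarrow> real"
  assumes fin: "finite S" and p: "set_pmf p \<subseteq> S" and closed: "\<And>x. x \<in> S \<Longrightarrow> set_pmf (Q x) \<subseteq> S"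
  shows "measure_pmf.expectation (bind_pmf p Q) f = measure_pmf.expectation p (\<lambda>x. measure_pmf.expectation (Q x) f)"
proof -
  have fin_Q: "\<And>x. x \<in> S \<Longrightarrow> finite (set_pmf (Q x))"
    using closed fin finite_subset by blast
  have "measure_pmf.expectation (bind_pmf p Q) f = (\<Sum>x\<in>S. pmf p x * measure_pmf.expectation (Q x) f)"
    by (simp add: pmf_expectation_bind[where f = Q, OF fin fin_Q p])
  then show ?thesis
    by (simp add: expectation_pmf_finite[OF fin p])
qed

lemma integrable_finite_pmf [simp]:
  fixes f :: "'a \<Rightarrow> real"
  shows "finite (set_pmf q) \<Longrightarrow> integrable (measure_pmf q) f"
  by (rule integrable_measure_pmf_finite)

lemma expectation_mono_finite_pmf:
  fixes f g :: "'a \<Rightarrow> real"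
  assumes "finite (set_pmf p)" "\<And>y. y \<in> set_pmf p \<Longrightarrow> f y \<le> g y"
  shows "measure_pmf.expectation p f \<le> measure_pmf.expectation p g"
  using assms by (intro integral_mono_AE) (auto intro!: AE_pmfI)

lemma longrun_prob_le_drift:
  fixes \<Phi> :: "'a \<Rightarrow> real"
  assumes fin: "finite S" and init: "set_pmf \<mu> \<subseteq> S" and closed: "\<And>x. x \<in> S \<Longrightarrow> set_pmf (Q x) \<subseteq> S"
    and "c > 0"
    and range: "\<And>t x. x \<in> set_pmf (mc_dist Q \<mu> t) \<Longrightarrow> a \<le> \<Phi> x \<and> \<Phi> x \<le> a + w"
    and drift: "\<And>t x. x \<in> set_pmf (mc_dist Q \<mu> t) \<Longrightarrow>
      measure_pmf.expectation (Q x) \<Phi> \<le> \<Phi> x + \<epsilon> - c * indicator B x"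
  shows "longrun_prob Q \<mu> B \<le> \<epsilon> / c"
proof -
  define p where "p t = mc_dist Q \<mu> t" for t
  define E where "E t = measure_pmf.expectation (p t) \<Phi>" for t
  define P where "P t = measure_pmf.prob (p t) B" for t
  have sp: "set_pmf (p t) \<subseteq> S" for t
    unfolding p_def by (rule set_pmf_mc_dist_subset[OF init closed])
  have finp: "finite (set_pmf (p t))" for t
    using sp fin finite_subset by blast
  have step: "E (Suc t) \<le> E t + \<epsilon> - c * P t" for t
  proof -
    have "E (Suc t) = measure_pmf.expectation (p t) (\<lambda>x. measure_pmf.expectation (Q x) \<Phi>)"
      unfolding E_def p_def mc_dist_Suc by (rule expectation_bind_pmf_finite[OF fin sp[unfolded p_def] closed])
    also have "\<dots> \<le> measure_pmf.expectation (p t) (\<lambda>x. \<Phi> x + \<epsilon> - c * indicator B x)"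
      using drift unfolding p_def by (intro expectation_mono_finite_pmf[OF finp[unfolded p_def]])
    also have "\<dots> = E t + \<epsilon> - c * P t"
      unfolding E_def P_def using finp by simp
    finally show ?thesis .
  qed
  have telescoped: "E T + c * (\<Sum>t<T. P t) \<le> E 0 + real T * \<epsilon>" for T
  proof (induction T)
    case (Suc T)
    then show ?case using step[of T] by (simp add: ring_distribs)
  qed simp
  have E_lower: "a \<le> E t" and E_upper: "E t \<le> a + w" for t
    using range[of _ t] expectation_mono_finite_pmf[OF finp, where f = "\<lambda>_. a" and g = \<Phi>]
      expectation_mono_finite_pmf[OF finp, where f = \<Phi> and g = "\<lambda>_. a + w"]
    unfolding E_def p_def by auto
  have "c * (\<Sum>t<T. P t) \<le> w + real T * \<epsilon>" for T
    using telescoped[of T] E_lower[of T] E_upper[of 0] by (smt (verit))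
  then have avg: "(\<Sum>t<T. P t) / real T \<le> w / c * (1 / real T) + \<epsilon> / c" if "T > 0" for T
    using \<open>c > 0\<close> that by (simp add: field_simps)
  have "(\<lambda>T. w / c * (1 / real T) + \<epsilon> / c) \<longlonglongrightarrow> w / c * 0 + \<epsilon> / c"
    by (intro tendsto_intros lim_inverse_n')
  then have lim_bound: "(\<lambda>T. w / c * (1 / real T) + \<epsilon> / c) \<longlonglongrightarrow> \<epsilon> / c"
    by simp
  have lim_avg: "(\<lambda>T. (\<Sum>t<T. P t) / real T) \<longlonglongrightarrow> longrun_prob Q \<mu> B"
    unfolding P_def p_def by (rule LIMSEQ_longrun_prob[OF fin init closed])
  show ?thesis
    using avg by (intro LIMSEQ_le[OF lim_avg lim_bound]) (auto intro!: exI[of _ 1])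
qed

lemma expectation_max_level_le_escape:
  fixes V :: "'a \<Rightarrow> real"
  assumes fin: "finite (set_pmf q)" and "0 \<le> h" and V: "\<And>y. y \<in> set_pmf q \<Longrightarrow> V y \<le> Vmax"
  shows "measure_pmf.expectation q (\<lambda>y. max (V y) h) \<le> h + Vmax * measure_pmf.prob q {y. V y > h}"
proof -
  have "measure_pmf.expectation q (\<lambda>y. max (V y) h)
      \<le> measure_pmf.expectation q (\<lambda>y. h + Vmax * indicator {y. V y > h} y)"
    using V \<open>0 \<le> h\<close> by (intro expectation_mono_finite_pmf[OF fin]) (fastforce simp: indicator_def)
  also have "\<dots> = h + Vmax * measure_pmf.prob q {y. V y > h}"
    using fin by simp
  finally show ?thesis .
qed

lemma expectation_max_level_le_jump:
  fixes V :: "'a \<Rightarrow> real"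
  assumes fin: "finite (set_pmf q)" and "h \<le> v"
  shows "measure_pmf.expectation q (\<lambda>y. max (V y) h)
    \<le> v + measure_pmf.expectation q (\<lambda>y. max 0 (V y - v))"
proof -
  have "measure_pmf.expectation q (\<lambda>y. max (V y) h)
      \<le> measure_pmf.expectation q (\<lambda>y. v + max 0 (V y - v))"
    using \<open>h \<le> v\<close> by (intro expectation_mono_finite_pmf[OF fin]) auto
  then show ?thesis
    using fin by simp
qed

text \<open>A downward step of V, scaled by \<rho>, loses at most \<rho> * Vmax \<le> v - h and so stays above h.\<close>
lemma expectation_max_level_le_drift:
  fixes V :: "'a \<Rightarrow> real"
  assumes fin: "finite (set_pmf q)"
    and V: "\<And>y. y \<in> set_pmf q \<Longrightarrow> 0 \<le> V y" and "0 \<le> v" "v \<le> Vmax"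
    and "0 \<le> \<rho>" "\<rho> \<le> 1" "\<rho> * Vmax \<le> v - h"
  shows "measure_pmf.expectation q (\<lambda>y. max (V y) h)
    \<le> v + \<rho> * measure_pmf.expectation q (\<lambda>y. V y - v)
        + measure_pmf.expectation q (\<lambda>y. max 0 (V y - v))"
proof -
  have "max (V y) h \<le> v + \<rho> * (V y - v) + max 0 (V y - v)" if "y \<in> set_pmf q" for y
  proof (cases "V y \<le> v")
    case True
    have "\<rho> * (v - V y) \<le> \<rho> * Vmax"
      using V[OF that] \<open>v \<le> Vmax\<close> \<open>0 \<le> \<rho>\<close> by (intro mult_left_mono) auto
    moreover have "\<rho> * (v - V y) \<le> v - V y"
      using True \<open>0 \<le> \<rho>\<close> \<open>\<rho> \<le> 1\<close> by (intro mult_left_le_one_le) auto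
    ultimately show ?thesis
      using True \<open>\<rho> * Vmax \<le> v - h\<close> by (simp add: algebra_simps)
  next
    case False
    have "0 \<le> \<rho> * Vmax" "0 \<le> \<rho> * (V y - v)"
      using False \<open>0 \<le> \<rho>\<close> \<open>0 \<le> v\<close> \<open>v \<le> Vmax\<close> by auto
    then show ?thesis
      using False \<open>\<rho> * Vmax \<le> v - h\<close> by auto
  qed
  then have "measure_pmf.expectation q (\<lambda>y. max (V y) h)
      \<le> measure_pmf.expectation q (\<lambda>y. v + \<rho> * (V y - v) + max 0 (V y - v))"
    by (rule expectation_mono_finite_pmf[OF fin])
  then show ?thesis
    using fin by simp
qed

lemma expectation_max_level_drift:
  fixes V :: "'a \<Rightarrow> real" and Vmax \<eta> :: real
  defines "\<rho> \<equiv> min 1 (\<eta> / (2 * Vmax))"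
  assumes fin: "finite (set_pmf q)"
    and V: "\<And>y. y \<in> set_pmf q \<Longrightarrow> 0 \<le> V y \<and> V y \<le> Vmax" and v: "0 \<le> v" "v \<le> Vmax"
    and pos: "Vmax > 0" "\<eta> > 0" "a2 \<ge> 0" "a3 \<ge> 0" and a1: "a1 \<le> \<gamma> * \<rho> / 2"
    and drift: "\<eta> < v \<Longrightarrow> measure_pmf.expectation q (\<lambda>y. V y - v) \<le> - \<gamma>"
    and jump_hi: "\<eta> < v \<Longrightarrow> measure_pmf.expectation q (\<lambda>y. max 0 (V y - v)) \<le> a1"
    and jump_mid: "\<eta> / 2 < v \<Longrightarrow> v \<le> \<eta> \<Longrightarrow> measure_pmf.expectation q (\<lambda>y. max 0 (V y - v)) \<le> a2"
    and escape: "v \<le> \<eta> / 2 \<Longrightarrow> measure_pmf.prob q {y. V y > \<eta> / 2} \<le> a3"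
  shows "measure_pmf.expectation q (\<lambda>y. max (V y) (\<eta> / 2))
    \<le> max v (\<eta> / 2) + (a2 + Vmax * a3) - \<gamma> * \<rho> / 2 * indicator {u. \<eta> < u} v"
proof -
  have \<rho>: "0 < \<rho>" "\<rho> \<le> 1" "\<rho> * Vmax \<le> \<eta> / 2"
    using pos unfolding \<rho>_def by (auto simp: min_def field_simps)
  have "0 \<le> Vmax * a3"
    using pos by simp
  consider "v \<le> \<eta> / 2" | "\<eta> / 2 < v" "v \<le> \<eta>" | "\<eta> < v"
    by linarith
  then show ?thesis
  proof cases
    case 1
    have "measure_pmf.expectation q (\<lambda>y. max (V y) (\<eta> / 2))
        \<le> \<eta> / 2 + Vmax * measure_pmf.prob q {y. V y > \<eta> / 2}"
      using V pos by (intro expectation_max_level_le_escape[OF fin]) auto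
    also have "\<dots> \<le> \<eta> / 2 + Vmax * a3"
      using escape[OF 1] pos by (simp add: mult_left_mono)
    finally have "measure_pmf.expectation q (\<lambda>y. max (V y) (\<eta> / 2)) \<le> \<eta> / 2 + Vmax * a3" .
    then show ?thesis
      using 1 pos by simp
  next
    case 2
    have "measure_pmf.expectation q (\<lambda>y. max (V y) (\<eta> / 2))
        \<le> v + measure_pmf.expectation q (\<lambda>y. max 0 (V y - v))"
      using 2 by (intro expectation_max_level_le_jump[OF fin]) simp
    then show ?thesis
      using 2 jump_mid[OF 2] \<open>0 \<le> Vmax * a3\<close> by simp
  next
    case 3
    have E: "measure_pmf.expectation q (\<lambda>y. max (V y) (\<eta> / 2)) \<le> v - \<gamma> * \<rho> + a1"
      using expectation_max_level_le_drift[OF fin _ v, of V \<rho> "\<eta> / 2"] V \<rho> 3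
        mult_left_mono[OF drift[OF 3], of \<rho>] jump_hi[OF 3]
      by (fastforce simp: algebra_simps)
    have "max v (\<eta> / 2) = v" "indicator {u. \<eta> < u} v = (1 :: real)"
      using 3 pos by auto
    then show ?thesis
      using E a1 \<open>0 \<le> Vmax * a3\<close> \<open>0 \<le> a2\<close> by (simp only: mult_1_right)
  qed
qed

lemma longrun_prob_gt_le:
  fixes V :: "'a \<Rightarrow> real" and Vmax \<eta> :: real
  defines "\<rho> \<equiv> min 1 (\<eta> / (2 * Vmax))"
  assumes fin: "finite S" and init: "set_pmf \<mu> \<subseteq> S" and closed: "\<And>x. x \<in> S \<Longrightarrow> set_pmf (Q x) \<subseteq> S"
    and pos: "Vmax > 0" "\<eta> > 0" "\<gamma> > 0" "a2 \<ge> 0" "a3 \<ge> 0" and a1: "a1 \<le> \<gamma> * \<rho> / 2"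
    and bnd: "\<And>t x. x \<in> set_pmf (mc_dist Q \<mu> t) \<Longrightarrow> 0 \<le> V x \<and> V x \<le> Vmax"
    and drift: "\<And>t x. x \<in> set_pmf (mc_dist Q \<mu> t) \<Longrightarrow> V x > \<eta> \<Longrightarrow>
        measure_pmf.expectation (Q x) (\<lambda>y. V y - V x) \<le> - \<gamma>"
    and jump_hi: "\<And>t x. x \<in> set_pmf (mc_dist Q \<mu> t) \<Longrightarrow> V x > \<eta> \<Longrightarrow>
        measure_pmf.expectation (Q x) (\<lambda>y. max 0 (V y - V x)) \<le> a1"
    and jump_mid: "\<And>t x. x \<in> set_pmf (mc_dist Q \<mu> t) \<Longrightarrow> \<eta> / 2 < V x \<Longrightarrow> V x \<le> \<eta> \<Longrightarrow>
        measure_pmf.expectation (Q x) (\<lambda>y. max 0 (V y - V x)) \<le> a2"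
    and escape: "\<And>t x. x \<in> set_pmf (mc_dist Q \<mu> t) \<Longrightarrow> V x \<le> \<eta> / 2 \<Longrightarrow>
        measure_pmf.prob (Q x) {y. V y > \<eta> / 2} \<le> a3"
  shows "longrun_prob Q \<mu> {x. V x > \<eta>} \<le> (a2 + Vmax * a3) / (\<gamma> * \<rho> / 2)"
proof (rule longrun_prob_le_drift[OF fin init closed, where \<Phi> = "\<lambda>y. max (V y) (\<eta> / 2)"])
  show "0 < \<gamma> * \<rho> / 2"
    using pos unfolding \<rho>_def by simp
  show "\<eta> / 2 \<le> max (V x) (\<eta> / 2) \<and> max (V x) (\<eta> / 2) \<le> \<eta> / 2 + Vmax"
    if "x \<in> set_pmf (mc_dist Q \<mu> t)" for t x
    using bnd[OF that] pos by auto
  show "measure_pmf.expectation (Q x) (\<lambda>y. max (V y) (\<eta> / 2))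
      \<le> max (V x) (\<eta> / 2) + (a2 + Vmax * a3) - \<gamma> * \<rho> / 2 * indicator {x. V x > \<eta>} x"
    if x: "x \<in> set_pmf (mc_dist Q \<mu> t)" for t x
  proof -
    have "x \<in> S"
      using x set_pmf_mc_dist_subset[where Q = Q, OF init closed] by blast
    then have "finite (set_pmf (Q x))"
      using closed fin finite_subset by blast
    moreover have "0 \<le> V y \<and> V y \<le> Vmax" if "y \<in> set_pmf (Q x)" for y
      using bnd[of y "Suc t"] x that by auto
    ultimately show ?thesis
      using expectation_max_level_drift[of "Q x" V Vmax "V x" \<eta> a2 a3 a1 \<gamma>] bnd[OF x] pos a1
        drift[OF x] jump_hi[OF x] jump_mid[OF x] escape[OF x]
      unfolding \<rho>_def by (simp add: indicator_def)
  qed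
qed

lemma eventually_div_sqrt_le:
  fixes c K :: real
  assumes "c > 0"
  shows "\<forall>\<^sub>F N in sequentially. K / sqrt (real N) \<le> c"
proof -
  have "(\<lambda>N. K / sqrt (real N)) \<longlonglongrightarrow> 0"
    by (intro tendsto_divide_0[OF tendsto_const] filterlim_at_top_imp_at_infinity
        filterlim_compose[OF sqrt_at_top filterlim_real_sequentially])
  then have "\<forall>\<^sub>F N in sequentially. K / sqrt (real N) < c"
    using assms by (rule order_tendstoD(2))
  then show ?thesis
    by (auto elim: eventually_mono)
qed

lemma add_exp_le_exp_min:
  fixes a b x C C' :: real
  assumes "0 \<le> a" "0 \<le> b" "0 \<le> x"
  shows "a * exp (- C * x) + b * exp (- C' * x) \<le> (a + b) * exp (- min C C' * x)"
  using assms by (auto simp: distrib_right intro!: add_mono mult_left_mono mult_right_mono)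

theorem lemma8:
  fixes S :: "nat \<Rightarrow> 'a set"
    and Q :: "nat \<Rightarrow> 'a \<Rightarrow> 'a pmf"
    and \<mu> :: "nat \<Rightarrow> 'a pmf"
    and V :: "nat \<Rightarrow> 'a \<Rightarrow> real"
    and Vmax \<eta> \<gamma> C C' K :: real
  assumes fin: "\<And>N. finite (S N)"
    and init: "\<And>N. set_pmf (\<mu> N) \<subseteq> S N"
    and closed: "\<And>N x. x \<in> S N \<Longrightarrow> set_pmf (Q N x) \<subseteq> S N"
    and pos: "Vmax > 0" "\<eta> > 0" "\<gamma> > 0" "C > 0" "C' > 0" "K > 0"
    and bnd: "\<And>N t x. x \<in> set_pmf (mc_dist (Q N) (\<mu> N) t) \<Longrightarrow> 0 \<le> V N x \<and> V N x \<le> Vmax"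
    and drift: "\<And>N t x. x \<in> set_pmf (mc_dist (Q N) (\<mu> N) t) \<Longrightarrow> V N x > \<eta> \<Longrightarrow>
        measure_pmf.expectation (Q N x) (\<lambda>y. V N y - V N x) \<le> - \<gamma>"
    and jump_hi: "\<And>N t x. x \<in> set_pmf (mc_dist (Q N) (\<mu> N) t) \<Longrightarrow> V N x > \<eta> \<Longrightarrow>
        measure_pmf.expectation (Q N x) (\<lambda>y. max 0 (V N y - V N x)) \<le> K / sqrt (real N)"
    and jump_mid: "\<And>N t x. x \<in> set_pmf (mc_dist (Q N) (\<mu> N) t) \<Longrightarrow> \<eta> / 2 < V N x \<Longrightarrow> V N x \<le> \<eta> \<Longrightarrow>
        measure_pmf.expectation (Q N x) (\<lambda>y. max 0 (V N y - V N x)) \<le> K * exp (- C * real N)"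
    and escape: "\<And>N t x. x \<in> set_pmf (mc_dist (Q N) (\<mu> N) t) \<Longrightarrow> V N x \<le> \<eta> / 2 \<Longrightarrow>
        measure_pmf.prob (Q N x) {y. V N y > \<eta> / 2} \<le> K * exp (- C' * real N)"
  shows "\<exists>C'' K''. C'' > 0 \<and>
    (\<forall>\<^sub>F N in sequentially. longrun_prob (Q N) (\<mu> N) {x. V N x > \<eta>} \<le> K'' * exp (- C'' * real N))"
proof -
  define c where "c = \<gamma> * min 1 (\<eta> / (2 * Vmax)) / 2"
  have "c > 0"
    using pos unfolding c_def by simp
  have "\<forall>\<^sub>F N in sequentially.
      longrun_prob (Q N) (\<mu> N) {x. V N x > \<eta>} \<le> (K + Vmax * K) / c * exp (- min C C' * real N)"
    using eventually_div_sqrt_le[OF \<open>c > 0\<close>, of K]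
  proof eventually_elim
    case (elim N)
    have "longrun_prob (Q N) (\<mu> N) {x. V N x > \<eta>}
        \<le> (K * exp (- C * real N) + Vmax * (K * exp (- C' * real N))) / c"
      unfolding c_def
      by (rule longrun_prob_gt_le[OF fin init closed pos(1-3) _ _ _ bnd drift jump_hi jump_mid escape])
        (use pos elim in \<open>simp_all add: c_def\<close>)
    also have "\<dots> \<le> (K + Vmax * K) / c * exp (- min C C' * real N)"
      using add_exp_le_exp_min[of K "Vmax * K" "real N" C C'] pos \<open>c > 0\<close>
      by (simp add: divide_right_mono)
    finally show ?case .
  qed
  then show ?thesis
    using pos by (intro exI[of _ "min C C'"] exI[of _ "(K + Vmax * K) / c"]) simp
qed

end
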